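(* For an integer $r\ge 5$, let $freq_r(\mathrm{FL})$ and $freq_r(\mathrm{1P})$ denote the number of $7$-card subsets of the $4r$-card deck (defined in the context) that contain a flush, respectively a one-pair hand. Then: (i) there exists $N$ such that $freq_r(\mathrm{FL}) > freq_r(\mathrm{1P})$ for all $r \ge N$ (flushes eventually rank below one-pair hands in the frequency ranking); and (ii) if $r\ge 5$ and $freq_r(\mathrm{FL}) > freq_r(\mathrm{1P})$, then $r \ge 307$.
   Context: Fix an integer $r\ge 5$. The deck has $4r$ cards: each card has one of $4$ suits and one of $r$ ranks $1,2,\dots,r$, each (suit, rank) pair occurring exactly once. Let $S_r$ be the set of all $7$-card subsets of this deck (so $|S_r|=\binom{4r}{7}$). A $5$-card set is a flush (FL) if all five cards have the same suit. A $5$-card set contains a one-pair (1P) if two of its cards have the same rank. For a hand type $h$ and $s\in S_r$, say $h\in s$ if some $5$-card subset of $s$ is of type $h$ (counting is inclusive: a $5$-card set may be of several types simultaneously). Define $freq_r(h)=|\{s\in S_r : h\in s\}|$. The frequency ranking places type $h_0$ above $h_1$ exactly when $freq_r(h_0)<freq_r(h_1)$. *)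

theory Defs
  imports Main
begin

text \<open>A card is a pair (suit, rank); suits are 0..3, ranks are 1..r.\<close>
type_synonym card = "nat \<times> nat"

definition deck :: "nat \<Rightarrow> card set" where
  "deck r = {0..<4} \<times> {1..r}"

definition hands7 :: "nat \<Rightarrow> card set set" where
  "hands7 r = {s. s \<subseteq> deck r \<and> card s = 7}"

definition flush :: "card set \<Rightarrow> bool" where
  "flush H \<longleftrightarrow> card H = 5 \<and> (\<exists>c. \<forall>x\<in>H. fst x = c)"

definition one_pair :: "card set \<Rightarrow> bool" where
  "one_pair H \<longleftrightarrow> card H = 5 \<and> (\<exists>x\<in>H. \<exists>y\<in>H. x \<noteq> y \<and> snd x = snd y)"

definition contains_type :: "(card set \<Rightarrow> bool) \<Rightarrow> card set \<Rightarrow> bool" where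
  "contains_type h s \<longleftrightarrow> (\<exists>H. H \<subseteq> s \<and> card H = 5 \<and> h H)"

definition freq :: "nat \<Rightarrow> (card set \<Rightarrow> bool) \<Rightarrow> nat" where
  "freq r h = card {s \<in> hands7 r. contains_type h s}"

end

theory Submission
  imports Defs Complex_Main "HOL-Library.FuncSet"
begin

(* A seven-card hand contains a flush iff at least five of its cards share a suit. Since 5 + 5 > 7
   at most one suit can do so, whence freq_r(FL) = 4 * sum_{k=5..7} C(r,k) C(3r,7-k). A hand avoids
   a pair iff its seven ranks are distinct, i.e. it is the graph of a map from seven ranks to the
   suits, whence freq_r(1P) = C(4r,7) - 4^7 C(r,7). Expanding the binomials gives
   5040 (freq_r(FL) - freq_r(1P)) = r (r - 1) Q(r) for an explicit quintic Q, and Q changes sign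
   exactly between 306 and 307 among the integers r >= 5. *)

lemma card_subsets_split:
  assumes "finite A" "finite B" "A \<inter> B = {}" "k \<le> n"
  shows "card {s. s \<subseteq> A \<union> B \<and> card s = n \<and> card (s \<inter> A) = k}
         = (card A choose k) * (card B choose (n - k))"
proof -
  let ?S = "{s. s \<subseteq> A \<union> B \<and> card s = n \<and> card (s \<inter> A) = k}"
  let ?P = "{X. X \<subseteq> A \<and> card X = k} \<times> {Y. Y \<subseteq> B \<and> card Y = n - k}"
  have card_split: "card s = card (s \<inter> A) + card (s \<inter> B)" if "s \<subseteq> A \<union> B" for s
  proof -
    have "finite s" using that assms(1,2) finite_subset by blast
    then have "card ((s \<inter> A) \<union> (s \<inter> B)) = card (s \<inter> A) + card (s \<inter> B)"
      using assms(3) by (intro card_Un_disjoint) auto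
    moreover have "(s \<inter> A) \<union> (s \<inter> B) = s" using that by blast
    ultimately show ?thesis by simp
  qed
  have "bij_betw (\<lambda>s. (s \<inter> A, s \<inter> B)) ?S ?P"
  proof (rule bij_betw_byWitness[where f' = "\<lambda>(X, Y). X \<union> Y"])
    show "(\<lambda>s. (s \<inter> A, s \<inter> B)) ` ?S \<subseteq> ?P"
      using card_split by fastforce
    show "(\<lambda>(X, Y). X \<union> Y) ` ?P \<subseteq> ?S"
    proof clarify
      fix X Y assume "X \<subseteq> A" "Y \<subseteq> B" "k = card X" "card Y = n - card X"
      moreover have "(X \<union> Y) \<inter> A = X" "(X \<union> Y) \<inter> B = Y"
        using \<open>X \<subseteq> A\<close> \<open>Y \<subseteq> B\<close> assms(3) by blast+
      ultimately show "X \<union> Y \<subseteq> A \<union> B \<and> card (X \<union> Y) = n \<and> card ((X \<union> Y) \<inter> A) = card X"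
        using card_split[of "X \<union> Y"] assms(4) by auto
    qed
  qed (use assms(3) in auto)
  then have "card ?S = card ?P" by (rule bij_betw_same_card)
  also have "\<dots> = (card A choose k) * (card B choose (n - k))"
    by (simp add: card_cartesian_product n_subsets assms(1,2))
  finally show ?thesis .
qed

lemma card_subsets_at_least:
  assumes "finite A" "finite B" "A \<inter> B = {}"
  shows "card {s. s \<subseteq> A \<union> B \<and> card s = n \<and> m \<le> card (s \<inter> A)}
         = (\<Sum>k=m..n. (card A choose k) * (card B choose (n - k)))"
proof -
  define S where "S k = {s. s \<subseteq> A \<union> B \<and> card s = n \<and> card (s \<inter> A) = k}" for k
  have fin: "finite (S k)" for k
    using assms(1,2) unfolding S_def by (auto intro: finite_subset[of _ "Pow (A \<union> B)"])
  have "{s. s \<subseteq> A \<union> B \<and> card s = n \<and> m \<le> card (s \<inter> A)} = (\<Union>k\<in>{m..n}. S k)"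
  proof -
    have "card (s \<inter> A) \<le> card s" if "s \<subseteq> A \<union> B" for s
      using that assms(1,2) by (intro card_mono) (auto intro: finite_subset)
    then show ?thesis unfolding S_def by fastforce
  qed
  then have "card {s. s \<subseteq> A \<union> B \<and> card s = n \<and> m \<le> card (s \<inter> A)}
             = (\<Sum>k=m..n. card (S k))"
    using fin by (simp add: card_UN_disjoint S_def disjoint_iff)
  also have "\<dots> = (\<Sum>k=m..n. (card A choose k) * (card B choose (n - k)))"
    unfolding S_def using assms by (intro sum.cong refl card_subsets_split) auto
  finally show ?thesis .
qed

lemma card_subsets_inj_snd:
  fixes S :: "'a set" and R :: "'b set"
  assumes "finite S" "finite R"
  shows "card {s. s \<subseteq> S \<times> R \<and> card s = n \<and> inj_on snd s} = (card R choose n) * card S ^ n"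
proof -
  let ?graph = "\<lambda>(X, f). (\<lambda>x. (f x, x)) ` X"
  let ?G = "SIGMA X:{X. X \<subseteq> R \<and> card X = n}. X \<rightarrow>\<^sub>E S"
  let ?T = "{s. s \<subseteq> S \<times> R \<and> card s = n \<and> inj_on snd s}"
  let ?ungraph = "\<lambda>s. (snd ` s, \<lambda>x\<in>snd ` s. fst (the_inv_into s snd x))"
  have fst_inv: "fst (the_inv_into s snd (snd y)) = fst y"
    if "inj_on snd s" "y \<in> s" for s :: "('a \<times> 'b) set" and y
    using that by (simp add: the_inv_into_f_f)
  have "bij_betw ?graph ?G ?T"
  proof (rule bij_betw_byWitness[where f' = ?ungraph])
    show "\<forall>a\<in>?G. ?ungraph (?graph a) = a"
    proof (intro ballI)
      fix a assume "a \<in> ?G"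
      then obtain X f where a: "a = (X, f)" and f: "f \<in> X \<rightarrow>\<^sub>E S" by blast
      have inj: "inj_on snd ((\<lambda>x. (f x, x)) ` X)" by (auto simp: inj_on_def)
      have "(\<lambda>x\<in>X. fst (the_inv_into ((\<lambda>x. (f x, x)) ` X) snd x)) = f"
      proof
        fix x show "(\<lambda>x\<in>X. fst (the_inv_into ((\<lambda>x. (f x, x)) ` X) snd x)) x = f x"
          using f fst_inv[OF inj, of "(f x, x)"]
          by (cases "x \<in> X") (auto simp: PiE_iff extensional_def)
      qed
      then show "?ungraph (?graph a) = a" by (simp add: a image_image)
    qed
    show "\<forall>s\<in>?T. ?graph (?ungraph s) = s"
      using fst_inv by (force simp: image_image)
    show "?graph ` ?G \<subseteq> ?T"
      by (auto simp: card_image inj_on_def)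
    show "?ungraph ` ?T \<subseteq> ?G"
      using fst_inv by (force simp: card_image)
  qed
  then have "card ?T = card ?G"
    by (simp add: bij_betw_same_card)
  also have "\<dots> = (\<Sum>X\<in>{X. X \<subseteq> R \<and> card X = n}. card (X \<rightarrow>\<^sub>E S))"
    using assms by (intro card_SigmaI) (auto intro: finite_PiE finite_subset)
  also have "\<dots> = (\<Sum>X\<in>{X. X \<subseteq> R \<and> card X = n}. card S ^ n)"
    using assms(2) by (intro sum.cong refl) (auto simp: card_PiE dest: finite_subset)
  also have "\<dots> = (card R choose n) * card S ^ n"
    using assms by (simp add: n_subsets)
  finally show ?thesis .
qed

lemma contains_flush_iff:
  assumes "finite s"
  shows "contains_type flush s \<longleftrightarrow> (\<exists>c. 5 \<le> card {x \<in> s. fst x = c})"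
proof
  assume "contains_type flush s"
  then obtain H c where "H \<subseteq> s" "card H = 5" "\<forall>x\<in>H. fst x = c"
    unfolding contains_type_def flush_def by auto
  then have "card H \<le> card {x \<in> s. fst x = c}"
    using assms by (intro card_mono) auto
  then show "\<exists>c. 5 \<le> card {x \<in> s. fst x = c}"
    using \<open>card H = 5\<close> by auto
next
  assume "\<exists>c. 5 \<le> card {x \<in> s. fst x = c}"
  then obtain c H where "H \<subseteq> {x \<in> s. fst x = c}" "card H = 5"
    by (meson obtain_subset_with_card_n)
  then have "H \<subseteq> s \<and> card H = 5 \<and> (\<forall>x\<in>H. fst x = c)" by auto
  then show "contains_type flush s"
    unfolding contains_type_def flush_def by blast
qed

lemma contains_one_pair_iff:
  assumes "finite s" "5 \<le> card s"
  shows "contains_type one_pair s \<longleftrightarrow> \<not> inj_on snd s"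
proof
  assume "contains_type one_pair s"
  then obtain H where "H \<subseteq> s" "one_pair H"
    unfolding contains_type_def by blast
  then obtain x y where "x \<in> s" "y \<in> s" "x \<noteq> y" "snd x = snd y"
    unfolding one_pair_def by blast
  then show "\<not> inj_on snd s"
    unfolding inj_on_def by blast
next
  assume "\<not> inj_on snd s"
  then obtain x y where xy: "x \<in> s" "y \<in> s" "x \<noteq> y" "snd x = snd y"
    unfolding inj_on_def by auto
  have "\<exists>H. {x, y} \<subseteq> H \<and> H \<subseteq> s \<and> card H = 5"
    using xy assms by (intro exists_subset_between) auto
  then obtain H where "{x, y} \<subseteq> H" "H \<subseteq> s" "card H = 5" by blast
  then have "H \<subseteq> s \<and> card H = 5 \<and> x \<in> H \<and> y \<in> H" by auto
  then show "contains_type one_pair s"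
    using xy unfolding contains_type_def one_pair_def by blast
qed

lemma finite_deck [simp]: "finite (deck r)"
  by (simp add: deck_def)

lemma card_deck: "card (deck r) = 4 * r"
  by (simp add: deck_def card_cartesian_product)

lemma finite_hands7: "finite (hands7 r)"
  unfolding hands7_def by (rule finite_subset[of _ "Pow (deck r)"]) auto

lemma freq_one_pair:
  "freq r one_pair + (r choose 7) * 4 ^ 7 = 4 * r choose 7"
proof -
  let ?D = "{s. s \<subseteq> deck r \<and> card s = 7 \<and> inj_on snd s}"
  have "contains_type one_pair s \<longleftrightarrow> s \<notin> ?D" if "s \<in> hands7 r" for s
    using that contains_one_pair_iff[of s] by (auto simp: hands7_def dest: finite_subset)
  then have "{s \<in> hands7 r. contains_type one_pair s} = hands7 r - ?D"
    by blast
  moreover have "?D \<subseteq> hands7 r"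
    unfolding hands7_def by blast
  ultimately have "freq r one_pair + card ?D = card (hands7 r)"
    unfolding freq_def using card_mono[OF finite_hands7, of ?D]
    by (simp add: card_Diff_subset finite_subset[OF _ finite_hands7])
  moreover have "card (hands7 r) = 4 * r choose 7"
    unfolding hands7_def by (simp add: n_subsets card_deck)
  moreover have "card ?D = (r choose 7) * 4 ^ 7"
    using card_subsets_inj_snd[of "{0..<4::nat}" "{1..r}" 7] by (simp add: deck_def)
  ultimately show ?thesis by simp
qed

lemma card_hands7_suit_at_least:
  assumes "c < 4"
  shows "card {s \<in> hands7 r. m \<le> card {x \<in> s. fst x = c}}
         = (\<Sum>k=m..7. (r choose k) * (3 * r choose (7 - k)))"
proof -
  let ?A = "{c} \<times> {1..r}"
  let ?B = "deck r - ?A"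
  have deck_eq: "?A \<union> ?B = deck r" using assms by (auto simp: deck_def)
  have "card ?B = 4 * r - r"
    using assms by (subst card_Diff_subset) (auto simp: card_deck card_cartesian_product deck_def)
  then have card_B: "card ?B = 3 * r" by simp
  have "{x \<in> s. fst x = c} = s \<inter> ?A" if "s \<subseteq> deck r" for s
    using that by (auto simp: deck_def)
  then have "{s \<in> hands7 r. m \<le> card {x \<in> s. fst x = c}}
             = {s. s \<subseteq> ?A \<union> ?B \<and> card s = 7 \<and> m \<le> card (s \<inter> ?A)}"
    unfolding hands7_def deck_eq by auto
  then have "card {s \<in> hands7 r. m \<le> card {x \<in> s. fst x = c}}
             = card {s. s \<subseteq> ?A \<union> ?B \<and> card s = 7 \<and> m \<le> card (s \<inter> ?A)}"
    by (rule arg_cong)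
  also have "\<dots> = (\<Sum>k=m..7. (card ?A choose k) * (card ?B choose (7 - k)))"
    by (rule card_subsets_at_least) auto
  also have "\<dots> = (\<Sum>k=m..7. (r choose k) * (3 * r choose (7 - k)))"
    by (simp only: card_B card_cartesian_product) simp
  finally show ?thesis .
qed

lemma freq_flush:
  "freq r flush = 4 * (\<Sum>k=5..7. (r choose k) * (3 * r choose (7 - k)))"
proof -
  define F where "F c = {s \<in> hands7 r. 5 \<le> card {x \<in> s. fst x = c}}" for c
  have fin_s: "finite s" "card s = 7" if "s \<in> hands7 r" for s
    using that unfolding hands7_def by (auto dest: finite_subset)
  have "contains_type flush s \<longleftrightarrow> (\<exists>c\<in>{..<4}. s \<in> F c)" if "s \<in> hands7 r" for s
  proof -
    have "{x \<in> s. fst x = c} = {}" if "\<not> c < 4" for c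
      using \<open>s \<in> hands7 r\<close> that by (auto simp: hands7_def deck_def)
    then have "(\<exists>c. 5 \<le> card {x \<in> s. fst x = c})
               \<longleftrightarrow> (\<exists>c\<in>{..<4}. 5 \<le> card {x \<in> s. fst x = c})"
      by (metis card.empty lessThan_iff not_numeral_le_zero)
    then show ?thesis
      using contains_flush_iff[OF fin_s(1)[OF that]] that by (simp add: F_def)
  qed
  then have "{s \<in> hands7 r. contains_type flush s} = (\<Union>c\<in>{..<4}. F c)"
    unfolding F_def by blast
  moreover have "F i \<inter> F j = {}" if "i \<noteq> j" for i j
  proof -
    have "card {x \<in> s. fst x = i} + card {x \<in> s. fst x = j} \<le> 7" if "s \<in> hands7 r" for s
    proof -
      have "card {x \<in> s. fst x = i} + card {x \<in> s. fst x = j}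
            = card ({x \<in> s. fst x = i} \<union> {x \<in> s. fst x = j})"
        using fin_s[OF that] \<open>i \<noteq> j\<close> by (intro card_Un_disjoint[symmetric]) auto
      also have "\<dots> \<le> card s" using fin_s[OF that] by (intro card_mono) auto
      finally show ?thesis using fin_s[OF that] by simp
    qed
    then show ?thesis unfolding F_def by fastforce
  qed
  ultimately have "freq r flush = (\<Sum>c\<in>{..<4}. card (F c))"
    unfolding freq_def using finite_hands7
    by (simp add: card_UN_disjoint F_def)
  also have "\<dots> = 4 * (\<Sum>k=5..7. (r choose k) * (3 * r choose (7 - k)))"
    unfolding F_def by (simp add: card_hands7_suit_at_least)
  finally show ?thesis .
qed

lemma real_binomial_eq_falling_factorial:
  "real (m choose k) = (\<Prod>i<k. real m - real i) / fact k"
  using gbinomial_mult_fact[of k "real m"]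
  by (simp add: binomial_gbinomial atLeast0LessThan field_simps)

definition freq_gap_poly :: "real \<Rightarrow> real" where
  "freq_gap_poly x = 844 * x ^ 5 - 266360 * x ^ 4 + 2458460 * x ^ 3 - 9464080 * x ^ 2
                     + 17099856 * x - 11796480"

lemma freq_gap:
  "5040 * (real (freq r flush) - real (freq r one_pair))
   = real r * (real r - 1) * freq_gap_poly (real r)"
proof -
  have "real (freq r one_pair) = real (4 * r choose 7) - real (r choose 7) * 4 ^ 7"
    using arg_cong[OF freq_one_pair[of r], of real] by simp
  moreover have "(\<Sum>k=5..7. f k) = f 5 + f 6 + f 7" for f :: "nat \<Rightarrow> nat"
    by (simp add: numeral_eq_Suc)
  ultimately show ?thesis
    by (simp add: freq_flush real_binomial_eq_falling_factorial freq_gap_poly_def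
        numeral_eq_Suc lessThan_Suc fact_numeral field_simps power_def)
qed

lemma freq_gap_poly_pos:
  assumes "307 \<le> x"
  shows "0 < freq_gap_poly x"
proof -
  define t where "t = x - 307"
  have "0 \<le> t" using assms by (simp add: t_def)
  have "freq_gap_poly x = 5828826265920 + 7347143678656 * t + 95836494660 * t ^ 2
                          + 470829940 * t ^ 3 + 1029180 * t ^ 4 + 844 * t ^ 5"
    unfolding freq_gap_poly_def t_def by (simp add: power_def algebra_simps)
  then show ?thesis using \<open>0 \<le> t\<close> by (simp add: add_pos_nonneg)
qed

lemma freq_gap_poly_neg:
  assumes "10 \<le> x" "x \<le> 306"
  shows "freq_gap_poly x < 0"
proof -
  \<comment> \<open>the quadratic factor below has its roots near 9.5 and 306.1\<close>
  have "freq_gap_poly x = x ^ 3 * (844 * (x - 10) * (x - 306) + 344 * x - 124180)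
                          - x * (9464080 * x - 17099856) - 11796480"
    unfolding freq_gap_poly_def by (simp add: power_def algebra_simps)
  moreover have "844 * (x - 10) * (x - 306) + 344 * x - 124180 < 0"
  proof -
    have "(x - 10) * (x - 306) \<le> 0" using assms by (simp add: mult_nonneg_nonpos)
    then show ?thesis using assms by linarith
  qed
  then have "x ^ 3 * (844 * (x - 10) * (x - 306) + 344 * x - 124180) < 0"
    using assms by (simp add: mult_pos_neg)
  moreover have "0 < x * (9464080 * x - 17099856)"
    using assms by simp
  ultimately show ?thesis by linarith
qed

lemma freq_gap_poly_neg_nat:
  assumes "5 \<le> n" "n < 307"
  shows "freq_gap_poly (real n) < 0"
proof (cases "n < 10")
  case True
  with assms have "n \<in> {5, 6, 7, 8, 9}" by auto
  then show ?thesis by (auto simp: freq_gap_poly_def)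
next
  case False
  then show ?thesis using assms by (intro freq_gap_poly_neg) auto
qed

lemma freq_flush_gt_one_pair_iff:
  assumes "2 \<le> r"
  shows "freq r one_pair < freq r flush \<longleftrightarrow> 0 < freq_gap_poly (real r)"
proof -
  have "freq r one_pair < freq r flush
        \<longleftrightarrow> 0 < 5040 * (real (freq r flush) - real (freq r one_pair))"
    by simp
  also have "\<dots> \<longleftrightarrow> 0 < real r * (real r - 1) * freq_gap_poly (real r)"
    unfolding freq_gap ..
  also have "\<dots> \<longleftrightarrow> 0 < freq_gap_poly (real r)"
  proof -
    have "0 < real r * (real r - 1)" using assms by simp
    then show ?thesis by (meson mult_pos_pos zero_less_mult_pos)
  qed
  finally show ?thesis .
qed

theorem fact1:
  shows "(\<exists>N. \<forall>r\<ge>N. freq r flush > freq r one_pair) \<and>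
         (\<forall>r\<ge>5. freq r flush > freq r one_pair \<longrightarrow> r \<ge> 307)"
proof
  show "\<exists>N. \<forall>r\<ge>N. freq r flush > freq r one_pair"
    using freq_flush_gt_one_pair_iff freq_gap_poly_pos by (intro exI[of _ 307]) auto
  show "\<forall>r\<ge>5. freq r flush > freq r one_pair \<longrightarrow> r \<ge> 307"
  proof (intro allI impI)
    fix r :: nat
    assume "5 \<le> r" "freq r flush > freq r one_pair"
    then have "0 < freq_gap_poly (real r)"
      using freq_flush_gt_one_pair_iff by simp
    then show "r \<ge> 307"
      using freq_gap_poly_neg_nat[of r] \<open>5 \<le> r\<close> by fastforce
  qed
qed

end
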